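(* Let $\Omega$ be a finite set, $n\ge1$, and $P_i,Q_i$ ($i=1,\dots,n$) strictly positive probability mass functions on $\Omega$. For a pair $(P,Q)$ of strictly positive probability mass functions on a finite set $\Sigma$, define its encoding $\eta_{P,Q}:=\sum_{s\in\Sigma}\sqrt{P(s)Q(s)}\,\delta_{\frac12\log\frac{P(s)}{Q(s)}}$ (a measure on $\mathbb R$, $\delta_u$ the Dirac mass at $u$), and let $\eta_i:=\eta_{P_i,Q_i}$. Define probability mass functions on $[n]\times\Omega$ by $\Lambda_P(i,\omega):=\frac1nP_i(\omega)$ and $\Lambda_Q(i,\omega):=\frac1nQ_i(\omega)$. Then the encoding $\eta_{\Lambda_P,\Lambda_Q}$ equals $\bar\eta:=\frac1n\sum_{i=1}^n\eta_i$, and consequently \[ T(\bar\eta^{*n})=\mathrm{TV}(\Lambda_P^{\otimes n},\Lambda_Q^{\otimes n}), \] where $T(\eta):=\frac12\int_{\mathbb R}|e^x-e^{-x}|\,\eta(dx)$.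
   Context: $\bar\eta^{*n}$ is the $n$-fold convolution of $\bar\eta$ with itself. $[n]=\{1,\dots,n\}$. For probability measures on a finite set, $\mathrm{TV}(\mu,\nu)=\frac12\sum|\mu(\cdot)-\nu(\cdot)|$. *)

theory Defs
  imports Complex_Main "HOL-Library.FuncSet"
begin

text \<open>Finitely supported (signed) measures on the real line are represented by their
  weight functions \<open>real \<Rightarrow> real\<close>: the measure is \<open>\<Sum>x. w x \<cdot> \<delta>_x\<close>.\<close>

definition strictly_pos_pmf :: "'a set \<Rightarrow> ('a \<Rightarrow> real) \<Rightarrow> bool" where
  "strictly_pos_pmf S p \<longleftrightarrow> (\<forall>s\<in>S. p s > 0) \<and> sum p S = 1"

definition encoding :: "'a set \<Rightarrow> ('a \<Rightarrow> real) \<Rightarrow> ('a \<Rightarrow> real) \<Rightarrow> real \<Rightarrow> real" where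
  "encoding S P Q = (\<lambda>u. \<Sum>s\<in>{s\<in>S. ln (P s / Q s) / 2 = u}. sqrt (P s * Q s))"

definition wsupp :: "(real \<Rightarrow> real) \<Rightarrow> real set" where
  "wsupp \<mu> = {x. \<mu> x \<noteq> 0}"

definition conv :: "(real \<Rightarrow> real) \<Rightarrow> (real \<Rightarrow> real) \<Rightarrow> real \<Rightarrow> real" where
  "conv \<mu> \<nu> = (\<lambda>x. \<Sum>y\<in>wsupp \<mu>. \<mu> y * \<nu> (x - y))"

primrec conv_pow :: "(real \<Rightarrow> real) \<Rightarrow> nat \<Rightarrow> real \<Rightarrow> real" where
  "conv_pow \<mu> 0 = (\<lambda>x. if x = 0 then 1 else 0)"
| "conv_pow \<mu> (Suc k) = conv \<mu> (conv_pow \<mu> k)"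

definition T_fun :: "(real \<Rightarrow> real) \<Rightarrow> real" where
  "T_fun \<eta> = (1/2) * (\<Sum>x\<in>wsupp \<eta>. \<bar>exp x - exp (- x)\<bar> * \<eta> x)"

definition TV :: "'b set \<Rightarrow> ('b \<Rightarrow> real) \<Rightarrow> ('b \<Rightarrow> real) \<Rightarrow> real" where
  "TV S \<mu> \<nu> = (1/2) * (\<Sum>x\<in>S. \<bar>\<mu> x - \<nu> x\<bar>)"

definition prod_space :: "'b set \<Rightarrow> nat \<Rightarrow> (nat \<Rightarrow> 'b) set" where
  "prod_space S n = PiE {..<n} (\<lambda>_. S)"

definition prod_pmf_pow :: "('b \<Rightarrow> real) \<Rightarrow> nat \<Rightarrow> (nat \<Rightarrow> 'b) \<Rightarrow> real" where
  "prod_pmf_pow p n = (\<lambda>x. \<Prod>j<n. p (x j))"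

end

theory Submission
  imports Defs
begin

text \<open>The encoding of \<open>(P, Q)\<close> is the pushforward of the weights \<open>sqrt (P Q)\<close> under the
  half log-likelihood ratio \<open>1/2 log (P/Q)\<close>. A convolution of pushforwards is the pushforward
  of the product weights under the sum of the maps, and both the log-likelihood ratio and the
  weight tensorize, so the \<open>n\<close>-fold convolution power of an encoding is the encoding of the
  product pair. At \<open>x = 1/2 log (P/Q)\<close> one has \<open>|e^x - e^-x| sqrt (P Q) = |P - Q|\<close>, so \<open>T\<close> of
  an encoding is the total variation distance of the encoded pair. In the mixture the factor
  \<open>1/n\<close> cancels in the likelihood ratio and factors out of the weight, which makes its encoding
  the average of the \<open>\<eta>\<^sub>i\<close>.\<close>

definition pushforward :: "'b set \<Rightarrow> ('b \<Rightarrow> real) \<Rightarrow> ('b \<Rightarrow> real) \<Rightarrow> real \<Rightarrow> real" where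
  "pushforward A g w = (\<lambda>u. \<Sum>s\<in>A. if g s = u then w s else 0)"

lemma encoding_eq_pushforward:
  "finite S \<Longrightarrow> encoding S P Q = pushforward S (\<lambda>s. ln (P s / Q s) / 2) (\<lambda>s. sqrt (P s * Q s))"
  unfolding encoding_def pushforward_def by (auto simp: sum.inter_filter)

lemma pushforward_cong:
  "(\<And>s. s \<in> A \<Longrightarrow> g s = g' s) \<Longrightarrow> (\<And>s. s \<in> A \<Longrightarrow> w s = w' s) \<Longrightarrow>
    pushforward A g w = pushforward A g' w'"
  unfolding pushforward_def by (intro ext sum.cong) auto

lemma pushforward_reindex:
  "bij_betw f A B \<Longrightarrow> pushforward B g w = pushforward A (g \<circ> f) (w \<circ> f)"
  unfolding pushforward_def comp_def by (intro ext) (simp add: sum.reindex_bij_betw[symmetric])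

lemma wsupp_pushforward: "wsupp (pushforward A g w) \<subseteq> g ` A"
  unfolding wsupp_def pushforward_def by (force intro: sum.neutral)

lemma sum_wsupp_pushforward:
  assumes "finite A"
  shows "(\<Sum>x\<in>wsupp (pushforward A g w). h x * pushforward A g w x) = (\<Sum>s\<in>A. h (g s) * w s)"
proof -
  have "(\<Sum>x\<in>wsupp (pushforward A g w). h x * pushforward A g w x) =
      (\<Sum>x\<in>g ` A. h x * pushforward A g w x)"
    using assms wsupp_pushforward[of A g w]
    by (intro sum.mono_neutral_left) (auto simp: wsupp_def)
  also have "\<dots> = (\<Sum>x\<in>g ` A. \<Sum>s\<in>A. if g s = x then h (g s) * w s else 0)"
    unfolding pushforward_def by (auto simp: sum_distrib_left intro!: sum.cong)
  also have "\<dots> = (\<Sum>s\<in>A. \<Sum>x\<in>g ` A. if g s = x then h (g s) * w s else 0)"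
    by (rule sum.swap)
  also have "\<dots> = (\<Sum>s\<in>A. h (g s) * w s)"
    using assms by (auto intro!: sum.cong)
  finally show ?thesis .
qed

lemma conv_pushforward:
  assumes "finite A" "finite B"
  shows "conv (pushforward A g w) (pushforward B g' w') =
    pushforward (A \<times> B) (\<lambda>(s, t). g s + g' t) (\<lambda>(s, t). w s * w' t)"
proof
  fix x
  have "conv (pushforward A g w) (pushforward B g' w') x =
      (\<Sum>y\<in>wsupp (pushforward A g w). pushforward B g' w' (x - y) * pushforward A g w y)"
    unfolding conv_def by (simp add: mult.commute)
  also have "\<dots> = (\<Sum>s\<in>A. pushforward B g' w' (x - g s) * w s)"
    by (rule sum_wsupp_pushforward[OF assms(1)])
  also have "\<dots> = (\<Sum>s\<in>A. \<Sum>t\<in>B. if g s + g' t = x then w s * w' t else 0)"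
    unfolding pushforward_def by (auto simp: sum_distrib_right intro!: sum.cong)
  also have "\<dots> = pushforward (A \<times> B) (\<lambda>(s, t). g s + g' t) (\<lambda>(s, t). w s * w' t) x"
    unfolding pushforward_def by (subst sum.cartesian_product) (auto intro!: sum.cong)
  finally show "conv (pushforward A g w) (pushforward B g' w') x = \<dots>" .
qed

lemma bij_betw_fun_upd_PiE:
  "bij_betw (\<lambda>(s, x). x(k := s)) (S \<times> PiE {..<k} (\<lambda>_. S)) (PiE {..<Suc k} (\<lambda>_. S))"
  by (auto simp: bij_betw_def lessThan_Suc PiE_insert_eq intro!: inj_combinator)

lemma conv_pow_pushforward:
  assumes "finite S"
  shows "conv_pow (pushforward S g w) m =
    pushforward (prod_space S m) (\<lambda>x. \<Sum>j<m. g (x j)) (\<lambda>x. \<Prod>j<m. w (x j))"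
proof (induction m)
  case 0
  then show ?case by (auto simp: pushforward_def prod_space_def)
next
  case (Suc k)
  have "conv_pow (pushforward S g w) (Suc k) = pushforward (S \<times> prod_space S k)
      (\<lambda>(s, x). g s + (\<Sum>j<k. g (x j))) (\<lambda>(s, x). w s * (\<Prod>j<k. w (x j)))"
    using assms by (simp add: Suc conv_pushforward prod_space_def finite_PiE)
  also have "\<dots> = pushforward (S \<times> prod_space S k)
      ((\<lambda>x. \<Sum>j<Suc k. g (x j)) \<circ> (\<lambda>(s, x). x(k := s)))
      ((\<lambda>x. \<Prod>j<Suc k. w (x j)) \<circ> (\<lambda>(s, x). x(k := s)))"
    by (intro pushforward_cong) (auto intro!: sum.cong prod.cong)
  also have "\<dots> = pushforward (prod_space S (Suc k))
      (\<lambda>x. \<Sum>j<Suc k. g (x j)) (\<lambda>x. \<Prod>j<Suc k. w (x j))"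
    unfolding prod_space_def by (rule pushforward_reindex[OF bij_betw_fun_upd_PiE, symmetric])
  finally show ?case .
qed

lemma prod_pmf_pow_pos:
  "(\<And>s. s \<in> S \<Longrightarrow> p s > 0) \<Longrightarrow> x \<in> prod_space S n \<Longrightarrow> prod_pmf_pow p n x > 0"
  unfolding prod_pmf_pow_def prod_space_def by (auto intro!: prod_pos)

lemma real_sqrt_prod: "sqrt (prod f A) = (\<Prod>x\<in>A. sqrt (f x))"
  by (induction A rule: infinite_finite_induct) (auto simp: real_sqrt_mult)

lemma conv_pow_encoding:
  assumes "finite S" "\<And>s. s \<in> S \<Longrightarrow> p s > 0" "\<And>s. s \<in> S \<Longrightarrow> q s > 0"
  shows "conv_pow (encoding S p q) n =
    encoding (prod_space S n) (prod_pmf_pow p n) (prod_pmf_pow q n)"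
proof -
  have half_llr: "(\<Sum>j<n. ln (p (x j) / q (x j)) / 2) =
      ln (prod_pmf_pow p n x / prod_pmf_pow q n x) / 2" if "x \<in> prod_space S n" for x
  proof -
    have pos: "p (x j) > 0" "q (x j) > 0" if "j < n" for j
      using \<open>x \<in> prod_space S n\<close> that assms by (auto simp: prod_space_def)
    have "(\<Sum>j<n. ln (p (x j) / q (x j)) / 2) = (\<Sum>j<n. (ln (p (x j)) - ln (q (x j))) / 2)"
      using pos by (auto intro!: sum.cong simp: ln_divide_pos)
    also have "\<dots> = ((\<Sum>j<n. ln (p (x j))) - (\<Sum>j<n. ln (q (x j)))) / 2"
      by (simp only: sum_divide_distrib[symmetric] sum_subtractf)
    also have "\<dots> = (ln (prod_pmf_pow p n x) - ln (prod_pmf_pow q n x)) / 2"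
      using pos unfolding prod_pmf_pow_def by (subst (1 2) ln_prod; force)
    also have "\<dots> = ln (prod_pmf_pow p n x / prod_pmf_pow q n x) / 2"
      using prod_pmf_pow_pos[OF assms(2) that] prod_pmf_pow_pos[OF assms(3) that]
      by (simp add: ln_divide_pos)
    finally show ?thesis .
  qed
  have sqrt_weight: "(\<Prod>j<n. sqrt (p (x j) * q (x j))) =
      sqrt (prod_pmf_pow p n x * prod_pmf_pow q n x)" for x
    unfolding prod_pmf_pow_def by (simp only: prod.distrib[symmetric] real_sqrt_prod)
  have "finite (prod_space S n)"
    using assms(1) by (simp add: prod_space_def finite_PiE)
  then have "encoding (prod_space S n) (prod_pmf_pow p n) (prod_pmf_pow q n) =
      pushforward (prod_space S n) (\<lambda>x. \<Sum>j<n. ln (p (x j) / q (x j)) / 2)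
        (\<lambda>x. \<Prod>j<n. sqrt (p (x j) * q (x j)))"
    by (simp add: encoding_eq_pushforward half_llr sqrt_weight cong: pushforward_cong)
  then show ?thesis
    using assms(1) by (simp add: encoding_eq_pushforward conv_pow_pushforward)
qed

lemma exp_half_ln: "x > 0 \<Longrightarrow> exp (ln x / 2) = sqrt x"
  using powr_half_sqrt[of x] by (simp add: powr_def)

lemma T_fun_encoding:
  assumes "finite A" "\<And>s. s \<in> A \<Longrightarrow> p s > 0" "\<And>s. s \<in> A \<Longrightarrow> q s > 0"
  shows "T_fun (encoding A p q) = TV A p q"
proof -
  have "\<bar>exp (ln (p s / q s) / 2) - exp (- (ln (p s / q s) / 2))\<bar> * sqrt (p s * q s) =
      \<bar>p s - q s\<bar>" if "s \<in> A" for s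
  proof -
    define a b where "a = sqrt (p s)" and "b = sqrt (q s)"
    have ab: "a > 0" "b > 0"
      using assms that by (auto simp: a_def b_def)
    have "exp (ln (p s / q s) / 2) = a / b"
      using assms that by (simp add: exp_half_ln real_sqrt_divide a_def b_def)
    moreover have "sqrt (p s * q s) = a * b"
      by (simp add: a_def b_def real_sqrt_mult)
    moreover have "\<bar>a / b - inverse (a / b)\<bar> * (a * b) = \<bar>a\<^sup>2 - b\<^sup>2\<bar>"
      using ab by (simp add: abs_mult[symmetric] field_simps power2_eq_square)
    moreover have "a\<^sup>2 = p s" "b\<^sup>2 = q s"
      using assms that by (auto simp: a_def b_def less_imp_le)
    ultimately show ?thesis
      by (simp add: exp_minus)
  qed
  then show ?thesis
    unfolding T_fun_def TV_def encoding_eq_pushforward[OF assms(1)] sum_wsupp_pushforward[OF assms(1)]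
    by simp
qed

lemma encoding_mixture:
  assumes "finite I" "finite \<Omega>" "c > 0"
  shows "encoding (I \<times> \<Omega>) (\<lambda>(i, \<omega>). P i \<omega> / c) (\<lambda>(i, \<omega>). Q i \<omega> / c) =
    (\<lambda>u. (1 / c) * (\<Sum>i\<in>I. encoding \<Omega> (P i) (Q i) u))"
proof
  fix u
  have "sqrt (P i \<omega> / c * (Q i \<omega> / c)) = sqrt (P i \<omega> * Q i \<omega>) / c" for i \<omega>
    using assms(3) by (simp add: real_sqrt_divide real_sqrt_mult)
  then show "encoding (I \<times> \<Omega>) (\<lambda>(i, \<omega>). P i \<omega> / c) (\<lambda>(i, \<omega>). Q i \<omega> / c) u =
      (1 / c) * (\<Sum>i\<in>I. encoding \<Omega> (P i) (Q i) u)"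
    using assms
    by (simp add: encoding_eq_pushforward pushforward_def sum.cartesian_product' sum_distrib_left
        if_distrib[of "\<lambda>v. v / c"] sum_divide_distrib cong: if_cong)
qed

theorem theorem3:
  fixes \<Omega> :: "'a set" and n :: nat and P Q :: "nat \<Rightarrow> 'a \<Rightarrow> real"
  assumes "finite \<Omega>" and "n \<ge> 1"
    and "\<And>i. i \<in> {1..n} \<Longrightarrow> strictly_pos_pmf \<Omega> (P i)"
    and "\<And>i. i \<in> {1..n} \<Longrightarrow> strictly_pos_pmf \<Omega> (Q i)"
  defines "\<Lambda>P \<equiv> (\<lambda>(i, \<omega>). P i \<omega> / real n)"
    and "\<Lambda>Q \<equiv> (\<lambda>(i, \<omega>). Q i \<omega> / real n)"
    and "\<eta>bar \<equiv> (\<lambda>u. (1 / real n) * (\<Sum>i=1..n. encoding \<Omega> (P i) (Q i) u))"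
  shows "encoding ({1..n} \<times> \<Omega>) \<Lambda>P \<Lambda>Q = \<eta>bar \<and>
         T_fun (conv_pow \<eta>bar n) =
           TV (prod_space ({1..n} \<times> \<Omega>) n) (prod_pmf_pow \<Lambda>P n) (prod_pmf_pow \<Lambda>Q n)"
proof -
  define S where "S = {1..n} \<times> \<Omega>"
  have finite_S: "finite S"
    using assms(1) by (simp add: S_def)
  have mixture: "encoding S \<Lambda>P \<Lambda>Q = \<eta>bar"
    unfolding S_def \<Lambda>P_def \<Lambda>Q_def \<eta>bar_def using assms(1,2) by (simp add: encoding_mixture)
  have pos: "\<Lambda>P s > 0" "\<Lambda>Q s > 0" if "s \<in> S" for s
    using that assms(2-4) by (auto simp: S_def \<Lambda>P_def \<Lambda>Q_def strictly_pos_pmf_def)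
  have "T_fun (conv_pow \<eta>bar n) =
      T_fun (encoding (prod_space S n) (prod_pmf_pow \<Lambda>P n) (prod_pmf_pow \<Lambda>Q n))"
    unfolding mixture[symmetric] using conv_pow_encoding[OF finite_S pos] by simp
  also have "\<dots> = TV (prod_space S n) (prod_pmf_pow \<Lambda>P n) (prod_pmf_pow \<Lambda>Q n)"
    using finite_S
    by (intro T_fun_encoding prod_pmf_pow_pos pos) (simp_all add: prod_space_def finite_PiE)
  finally show ?thesis
    using mixture unfolding S_def by simp
qed

end
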